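(* Let $(X,G)$ be topologically transitive and $X_0$ a dense $G$-invariant subset of $X_t$. Then $Q_0\subseteq S^{eq}_0$, and consequently $S^\ast_0\subseteq S^{eq}_0$.
   Context: $G$ is a group acting by homeomorphisms $x\mapsto gx$ on a compact metrizable space $X$, topologically transitive; $X_t:=\{x\in X:\overline{Gx}=X\}$; $X_0$ carries the subspace topology and $X_0^2$ the product topology. $G$ acts diagonally on $X^2$. $\Delta_0:=\{(x,x):x\in X_0\}$. $\mathcal U_0$ is the family of sets $U\cap X_0^2$ with $U\subseteq X^2$ open, $G$-invariant, $\Delta_0\subseteq U$; $Q_0:=\bigcap_{U_0\in\mathcal U_0}\overline{U_0}\cap X_0^2$. For a continuous $G$-equivariant map $\pi:X_0\to Y$ into a compact metrizable system $(Y,G)$ that is equicontinuous and minimal (equivalently, a compact metrizable group on which $G$ acts minimally by translations), let $S^\pi_0:=\{(x,x')\in X_0^2:\pi(x)=\pi(x')\}$; $S^{eq}_0:=\bigcap_\pi S^\pi_0$, the intersection over all such $Y$ and $\pi$. $S^\ast_0$ is the smallest closed (in $X_0^2$), $G$-invariant equivalence relation on $X_0$ containing $Q_0$. *)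

theory Defs
  imports "HOL-Analysis.Analysis"
begin

text \<open>A group G (an arbitrary group, written additively via the type class group_add;
  group_add is not assumed commutative) acting on a set X of a metric space
  by homeomorphisms x \<mapsto> act g x.\<close>

definition homeo_action :: "('g::group_add \<Rightarrow> 'a::metric_space \<Rightarrow> 'a) \<Rightarrow> 'a set \<Rightarrow> bool" where
  "homeo_action act X \<longleftrightarrow>
     (\<forall>g. act g ` X \<subseteq> X \<and> continuous_on X (act g)) \<and>
     (\<forall>x\<in>X. act 0 x = x) \<and>
     (\<forall>g h. \<forall>x\<in>X. act (g + h) x = act g (act h x))"

definition orbit :: "('g \<Rightarrow> 'a \<Rightarrow> 'a) \<Rightarrow> 'a \<Rightarrow> 'a set" where
  "orbit act x = range (\<lambda>g. act g x)"

definition topologically_transitive :: "('g \<Rightarrow> 'a::metric_space \<Rightarrow> 'a) \<Rightarrow> 'a set \<Rightarrow> bool" where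
  "topologically_transitive act X \<longleftrightarrow>
     (\<forall>U V. openin (top_of_set X) U \<and> openin (top_of_set X) V \<and> U \<noteq> {} \<and> V \<noteq> {}
        \<longrightarrow> (\<exists>g. act g ` U \<inter> V \<noteq> {}))"

definition transitive_points :: "('g \<Rightarrow> 'a::metric_space \<Rightarrow> 'a) \<Rightarrow> 'a set \<Rightarrow> 'a set" where
  "transitive_points act X = {x \<in> X. closure (orbit act x) = X}"

definition invariant_set :: "('g \<Rightarrow> 'a \<Rightarrow> 'a) \<Rightarrow> 'a set \<Rightarrow> bool" where
  "invariant_set act A \<longleftrightarrow> (\<forall>g. act g ` A \<subseteq> A)"

definition diag_act :: "('g \<Rightarrow> 'a \<Rightarrow> 'a) \<Rightarrow> 'g \<Rightarrow> 'a \<times> 'a \<Rightarrow> 'a \<times> 'a" where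
  "diag_act act g p = (act g (fst p), act g (snd p))"

definition Delta0 :: "'a set \<Rightarrow> ('a \<times> 'a) set" where
  "Delta0 X0 = {(x, x) | x. x \<in> X0}"

definition U0_family :: "('g \<Rightarrow> 'a::metric_space \<Rightarrow> 'a) \<Rightarrow> 'a set \<Rightarrow> 'a set \<Rightarrow> ('a \<times> 'a) set set" where
  "U0_family act X X0 =
     {U \<inter> (X0 \<times> X0) | U. openin (top_of_set (X \<times> X)) U \<and> invariant_set (diag_act act) U
                          \<and> Delta0 X0 \<subseteq> U}"

definition Q0 :: "('g \<Rightarrow> 'a::metric_space \<Rightarrow> 'a) \<Rightarrow> 'a set \<Rightarrow> 'a set \<Rightarrow> ('a \<times> 'a) set" where
  "Q0 act X X0 = (\<Inter>U0 \<in> U0_family act X X0. closure U0) \<inter> (X0 \<times> X0)"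

definition equicontinuous_system :: "('g \<Rightarrow> 'b::metric_space \<Rightarrow> 'b) \<Rightarrow> 'b set \<Rightarrow> bool" where
  "equicontinuous_system actY Y \<longleftrightarrow>
     (\<forall>e>0. \<exists>d>0. \<forall>g. \<forall>y\<in>Y. \<forall>y'\<in>Y. dist y y' < d \<longrightarrow> dist (actY g y) (actY g y') < e)"

definition minimal_system :: "('g \<Rightarrow> 'b::metric_space \<Rightarrow> 'b) \<Rightarrow> 'b set \<Rightarrow> bool" where
  "minimal_system actY Y \<longleftrightarrow> Y \<noteq> {} \<and> (\<forall>y\<in>Y. closure (orbit actY y) = Y)"

definition eq_factor_map ::
  "('g::group_add \<Rightarrow> 'a::metric_space \<Rightarrow> 'a) \<Rightarrow> 'a set \<Rightarrow>
   ('g \<Rightarrow> 'b::metric_space \<Rightarrow> 'b) \<Rightarrow> 'b set \<Rightarrow> ('a \<Rightarrow> 'b) \<Rightarrow> bool" where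
  "eq_factor_map act X0 actY Y \<pi> \<longleftrightarrow>
     compact Y \<and> homeo_action actY Y \<and> equicontinuous_system actY Y \<and> minimal_system actY Y \<and>
     continuous_on X0 \<pi> \<and> \<pi> ` X0 \<subseteq> Y \<and> (\<forall>g. \<forall>x\<in>X0. \<pi> (act g x) = actY g (\<pi> x))"

definition S_pi :: "'a set \<Rightarrow> ('a \<Rightarrow> 'b) \<Rightarrow> ('a \<times> 'a) set" where
  "S_pi X0 \<pi> = {(x, x'). x \<in> X0 \<and> x' \<in> X0 \<and> \<pi> x = \<pi> x'}"

text \<open>S^eq_0, intersecting over all equicontinuous minimal factors Y living in the type 'b.
  Since 'b is arbitrary in the main theorem, this captures the intersection over all Y.\<close>
definition S_eq :: "('g::group_add \<Rightarrow> 'a::metric_space \<Rightarrow> 'a) \<Rightarrow> 'a set \<Rightarrow> 'b::metric_space itself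
                    \<Rightarrow> ('a \<times> 'a) set" where
  "S_eq act X0 _ = \<Inter>{S_pi X0 \<pi> | \<pi>. \<exists>(actY :: 'g \<Rightarrow> 'b \<Rightarrow> 'b) Y. eq_factor_map act X0 actY Y \<pi>}"

definition S_star :: "('g::group_add \<Rightarrow> 'a::metric_space \<Rightarrow> 'a) \<Rightarrow> 'a set \<Rightarrow> 'a set \<Rightarrow> ('a \<times> 'a) set" where
  "S_star act X X0 = \<Inter>{R. closedin (top_of_set (X0 \<times> X0)) R \<and> invariant_set (diag_act act) R
                           \<and> equiv X0 R \<and> Q0 act X X0 \<subseteq> R}"

end

theory Submission imports Defs begin

text \<open>If \<pi> x \<noteq> \<pi> x' for a pair (x, x') in Q_0, choose d by equicontinuity of Y for
  e = dist (\<pi> x) (\<pi> x') / 2 and saturate the open neighbourhood {dist (\<pi> a) (\<pi> b) < d} of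
  the diagonal under the diagonal action. The saturation lies in U_0, and equicontinuity applied
  to the inverse group elements keeps it inside the closed set {dist (\<pi> a) (\<pi> b) \<le> e}; so that
  set contains (x, x'), contradicting the choice of e. Each S^\<pi>_0 is a closed invariant
  equivalence relation, hence so is S^eq_0, and it contains S^*_0.\<close>

lemma continuous_on_dist_pair:
  assumes "continuous_on A \<pi>"
  shows "continuous_on (A \<times> A) (\<lambda>p. dist (\<pi> (fst p)) (\<pi> (snd p)))"
proof -
  have "continuous_on (A \<times> A) (\<lambda>p. \<pi> (fst p))"
    by (rule continuous_on_compose2[OF assms continuous_on_fst]) (auto intro: continuous_on_id)
  moreover have "continuous_on (A \<times> A) (\<lambda>p. \<pi> (snd p))"
    by (rule continuous_on_compose2[OF assms continuous_on_snd]) (auto intro: continuous_on_id)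
  ultimately show ?thesis by (intro continuous_intros)
qed

lemma continuous_on_diag_act:
  assumes "continuous_on X (act g)"
  shows "continuous_on (X \<times> X) (diag_act act g)"
proof -
  have "continuous_on (X \<times> X) (\<lambda>p. act g (fst p))"
    by (rule continuous_on_compose2[OF assms continuous_on_fst]) (auto intro: continuous_on_id)
  moreover have "continuous_on (X \<times> X) (\<lambda>p. act g (snd p))"
    by (rule continuous_on_compose2[OF assms continuous_on_snd]) (auto intro: continuous_on_id)
  ultimately show ?thesis unfolding diag_act_def by (intro continuous_intros)
qed

definition diag_saturation :: "('g \<Rightarrow> 'a \<Rightarrow> 'a) \<Rightarrow> 'a set \<Rightarrow> ('a \<times> 'a) set \<Rightarrow> ('a \<times> 'a) set" where
  "diag_saturation act X T = {q \<in> X \<times> X. \<exists>g. diag_act act g q \<in> T}"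

lemma openin_diag_saturation:
  assumes "homeo_action act X" and "open T"
  shows "openin (top_of_set (X \<times> X)) (diag_saturation act X T)"
proof -
  have "continuous_on (X \<times> X) (diag_act act g)" for g
    using assms(1) by (intro continuous_on_diag_act) (simp add: homeo_action_def)
  then have "openin (top_of_set (X \<times> X)) ((X \<times> X) \<inter> diag_act act g -` T)" for g
    using assms(2) by (rule continuous_openin_preimage_gen)
  moreover have "diag_saturation act X T = (\<Union>g. (X \<times> X) \<inter> diag_act act g -` T)"
    unfolding diag_saturation_def by blast
  ultimately show ?thesis
    by (metis (no_types, lifting) imageE openin_Union)
qed

lemma invariant_diag_saturation:
  assumes "homeo_action act X"
  shows "invariant_set (diag_act act) (diag_saturation act X T)"
  unfolding invariant_set_def
proof (intro allI subsetI)
  fix h q assume "q \<in> diag_act act h ` diag_saturation act X T"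
  then obtain r g where r: "r \<in> X \<times> X" "diag_act act g r \<in> T" and q: "q = diag_act act h r"
    unfolding diag_saturation_def by auto
  have "act (g + - h) (act h z) = act g z" if "z \<in> X" for z
    using assms that unfolding homeo_action_def by (metis add.right_inverse image_subset_iff)
  then have "diag_act act (g + - h) q = diag_act act g r"
    using r(1) q unfolding diag_act_def by (auto simp: mem_Times_iff)
  moreover have "q \<in> X \<times> X"
    using assms r(1) q unfolding diag_act_def homeo_action_def by (auto simp: mem_Times_iff)
  ultimately show "q \<in> diag_saturation act X T"
    using r(2) unfolding diag_saturation_def by (auto intro!: exI[of _ "g + - h"])
qed

lemma diag_saturation_in_U0_family:
  assumes "homeo_action act X" and "X0 \<subseteq> X" and "open T" and "Delta0 X0 \<subseteq> T"
  shows "diag_saturation act X T \<inter> (X0 \<times> X0) \<in> U0_family act X X0"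
proof -
  have "Delta0 X0 \<subseteq> diag_saturation act X T"
    using assms(1,2,4) unfolding Delta0_def diag_saturation_def diag_act_def homeo_action_def
    by (fastforce intro: exI[of _ 0])
  then show ?thesis
    unfolding U0_family_def
    using openin_diag_saturation[OF assms(1,3)] invariant_diag_saturation[OF assms(1)] by blast
qed

lemma equicontinuous_system_inverse:
  assumes "homeo_action actY Y" and "equicontinuous_system actY Y" and "e > 0"
  obtains d where "d > 0"
    and "\<And>g y y'. y \<in> Y \<Longrightarrow> y' \<in> Y \<Longrightarrow> dist (actY g y) (actY g y') < d \<Longrightarrow> dist y y' < e"
proof -
  obtain d where "d > 0" and d: "\<And>g y y'. y \<in> Y \<Longrightarrow> y' \<in> Y \<Longrightarrow> dist y y' < d \<Longrightarrow>
      dist (actY g y) (actY g y') < e"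
    using assms(2,3) unfolding equicontinuous_system_def by meson
  have cancel: "actY (- g) (actY g y) = y" if "y \<in> Y" for g y
    using assms(1) that unfolding homeo_action_def by (metis add.left_inverse)
  have stays: "actY g y \<in> Y" if "y \<in> Y" for g y
    using assms(1) that unfolding homeo_action_def by auto
  show ?thesis
  proof (rule that[OF \<open>d > 0\<close>])
    fix g y y' assume "y \<in> Y" "y' \<in> Y" "dist (actY g y) (actY g y') < d"
    then have "dist (actY (- g) (actY g y)) (actY (- g) (actY g y')) < e"
      by (intro d stays)
    then show "dist y y' < e" using \<open>y \<in> Y\<close> \<open>y' \<in> Y\<close> cancel by simp
  qed
qed

lemma Q0_subset_S_pi:
  assumes hom: "homeo_action act X" and "X0 \<subseteq> X" and inv: "invariant_set act X0"
    and factor: "eq_factor_map act X0 actY Y \<pi>"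
  shows "Q0 act X X0 \<subseteq> S_pi X0 \<pi>"
proof (rule subrelI)
  fix x x' assume Q: "(x, x') \<in> Q0 act X X0"
  then have x: "x \<in> X0" "x' \<in> X0" unfolding Q0_def by auto
  have homY: "homeo_action actY Y" and eqY: "equicontinuous_system actY Y"
    and "continuous_on X0 \<pi>" and piY: "\<pi> ` X0 \<subseteq> Y"
    and equivar: "\<And>g a. a \<in> X0 \<Longrightarrow> \<pi> (act g a) = actY g (\<pi> a)"
    using factor unfolding eq_factor_map_def by auto
  define f where "f p = dist (\<pi> (fst p)) (\<pi> (snd p))" for p
  have cf: "continuous_on (X0 \<times> X0) f"
    unfolding f_def by (rule continuous_on_dist_pair) fact
  have "\<pi> x = \<pi> x'"
  proof (rule ccontr)
    assume "\<pi> x \<noteq> \<pi> x'"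
    define e where "e = f (x, x') / 2"
    have "e > 0" using \<open>\<pi> x \<noteq> \<pi> x'\<close> unfolding e_def f_def by simp
    then obtain d where "d > 0" and d: "\<And>g y y'. y \<in> Y \<Longrightarrow> y' \<in> Y \<Longrightarrow>
        dist (actY g y) (actY g y') < d \<Longrightarrow> dist y y' < e"
      using equicontinuous_system_inverse[OF homY eqY] by blast
    have "openin (top_of_set (X0 \<times> X0)) ((X0 \<times> X0) \<inter> f -` {..<d})"
      by (rule continuous_openin_preimage_gen[OF cf]) auto
    then obtain T where "open T" and T: "(X0 \<times> X0) \<inter> f -` {..<d} = T \<inter> (X0 \<times> X0)"
      unfolding openin_open by auto
    have "Delta0 X0 \<subseteq> T"
      using T \<open>d > 0\<close> unfolding Delta0_def f_def by auto
    let ?U = "diag_saturation act X T \<inter> (X0 \<times> X0)"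
    have U: "?U \<in> U0_family act X X0"
      by (rule diag_saturation_in_U0_family) fact+
    have "?U \<subseteq> (X0 \<times> X0) \<inter> f -` {..e}"
    proof (rule subrelI)
      fix a b assume "(a, b) \<in> ?U"
      then have ab: "(a, b) \<in> diag_saturation act X T" "a \<in> X0" "b \<in> X0" by auto
      then obtain g where "diag_act act g (a, b) \<in> T"
        unfolding diag_saturation_def by auto
      moreover have "diag_act act g (a, b) \<in> X0 \<times> X0"
        using inv ab unfolding invariant_set_def diag_act_def by auto
      ultimately have "diag_act act g (a, b) \<in> (X0 \<times> X0) \<inter> f -` {..<d}"
        unfolding T by blast
      then have "f (diag_act act g (a, b)) < d" by simp
      then have "dist (actY g (\<pi> a)) (actY g (\<pi> b)) < d"
        using ab equivar unfolding f_def diag_act_def by simp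
      moreover have "\<pi> a \<in> Y" "\<pi> b \<in> Y" using piY ab by auto
      ultimately have "dist (\<pi> a) (\<pi> b) < e" using d by blast
      then show "(a, b) \<in> (X0 \<times> X0) \<inter> f -` {..e}" using ab unfolding f_def by simp
    qed
    moreover have "closedin (top_of_set (X0 \<times> X0)) ((X0 \<times> X0) \<inter> f -` {..e})"
      by (rule continuous_closedin_preimage[OF cf]) auto
    then obtain C where "closed C" and C: "(X0 \<times> X0) \<inter> f -` {..e} = C \<inter> (X0 \<times> X0)"
      unfolding closedin_closed by auto
    ultimately have "closure ?U \<subseteq> C"
      by (intro closure_minimal) auto
    moreover have "(x, x') \<in> closure ?U"
      using Q U unfolding Q0_def by auto
    ultimately have "f (x, x') \<le> e" using C x by auto
    then show False using \<open>e > 0\<close> unfolding e_def by simp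
  qed
  then show "(x, x') \<in> S_pi X0 \<pi>"
    using x unfolding S_pi_def by simp
qed

lemma closedin_S_pi:
  fixes \<pi> :: "'a::metric_space \<Rightarrow> 'b::metric_space"
  assumes "continuous_on X0 \<pi>"
  shows "closedin (top_of_set (X0 \<times> X0)) (S_pi X0 \<pi>)"
proof -
  have "S_pi X0 \<pi> = (X0 \<times> X0) \<inter> (\<lambda>p. dist (\<pi> (fst p)) (\<pi> (snd p))) -` {0}"
    unfolding S_pi_def by auto
  then show ?thesis
    using continuous_closedin_preimage[OF continuous_on_dist_pair[OF assms]] by simp
qed

lemma invariant_S_pi:
  assumes "invariant_set act X0" and "\<And>g x. x \<in> X0 \<Longrightarrow> \<pi> (act g x) = actY g (\<pi> x)"
  shows "invariant_set (diag_act act) (S_pi X0 \<pi>)"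
  using assms unfolding invariant_set_def S_pi_def diag_act_def by (auto simp: image_subset_iff)

lemma equiv_S_pi: "equiv X0 (S_pi X0 \<pi>)"
  unfolding S_pi_def by (auto intro!: equivI simp: refl_on_def sym_def trans_def)

lemma closed_invariant_equiv_S_pi:
  assumes "invariant_set act X0" and "eq_factor_map act X0 actY Y \<pi>"
  shows "closedin (top_of_set (X0 \<times> X0)) (S_pi X0 \<pi>) \<and> invariant_set (diag_act act) (S_pi X0 \<pi>)
    \<and> equiv X0 (S_pi X0 \<pi>)"
proof -
  have "continuous_on X0 \<pi>" "\<And>g x. x \<in> X0 \<Longrightarrow> \<pi> (act g x) = actY g (\<pi> x)"
    using assms(2) unfolding eq_factor_map_def by auto
  then show ?thesis
    using closedin_S_pi invariant_S_pi[OF assms(1)] equiv_S_pi by blast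
qed

lemma invariant_diag_Times:
  assumes "invariant_set act X0"
  shows "invariant_set (diag_act act) (X0 \<times> X0)"
  using assms unfolding invariant_set_def diag_act_def by (auto simp: image_subset_iff)

lemma equiv_Times: "equiv A (A \<times> A)"
  by (auto intro: equivI simp: refl_on_def sym_def trans_def)

lemma equiv_Inter:
  assumes "K \<noteq> {}" and "\<And>S. S \<in> K \<Longrightarrow> equiv A S"
  shows "equiv A (\<Inter>K)"
proof (rule equivI)
  have "refl_on (\<Inter>((\<lambda>_. A) ` K)) (\<Inter>(id ` K))"
    using assms(2) by (intro refl_on_INTER) (simp add: equiv_def)
  then show "refl_on A (\<Inter>K)" using assms(1) by simp
  show "sym (\<Inter>K)" "trans (\<Inter>K)"
    using sym_INTER[of K id] trans_INTER[of K id] assms(2) by (simp_all add: equiv_def)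
  show "\<Inter>K \<subseteq> A \<times> A"
    using assms equiv_type by blast
qed

lemma invariant_set_Inter:
  assumes "\<And>S. S \<in> K \<Longrightarrow> invariant_set f S"
  shows "invariant_set f (\<Inter>K)"
  using assms unfolding invariant_set_def by blast

theorem mainTheorem4:
  fixes act :: "'g::group_add \<Rightarrow> 'a::metric_space \<Rightarrow> 'a"
    and X X0 :: "'a set"
  assumes "compact X"
    and "homeo_action act X"
    and "topologically_transitive act X"
    and "X0 \<subseteq> transitive_points act X"
    and "closure X0 = X"
    and "invariant_set act X0"
  shows "Q0 act X X0 \<subseteq> S_eq act X0 TYPE('b::metric_space)
       \<and> S_star act X X0 \<subseteq> S_eq act X0 TYPE('b::metric_space)"
proof -
  define factors where
    "factors = {\<pi>. \<exists>(actY :: 'g \<Rightarrow> 'b \<Rightarrow> 'b) Y. eq_factor_map act X0 actY Y \<pi>}"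
  define K where "K = insert (X0 \<times> X0) (S_pi X0 ` factors)"
    \<comment> \<open>X0 \<times> X0 keeps \<Inter>K a relation on X0 when there are no factors at all\<close>
  define R where "R = \<Inter>K"
  have R_S_eq: "R \<subseteq> S_eq act X0 TYPE('b)"
    unfolding R_def K_def S_eq_def factors_def by (intro Inter_greatest Inter_lower) auto
  have "X0 \<subseteq> X" using assms(4) unfolding transitive_points_def by auto
  moreover have "Q0 act X X0 \<subseteq> X0 \<times> X0" unfolding Q0_def by blast
  ultimately have Q: "Q0 act X X0 \<subseteq> R"
    unfolding R_def K_def factors_def
    by (intro Inter_greatest) (auto dest: Q0_subset_S_pi[OF assms(2) _ assms(6)])
  have members: "closedin (top_of_set (X0 \<times> X0)) S \<and> invariant_set (diag_act act) S \<and> equiv X0 S"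
    if "S \<in> K" for S
    using that closed_invariant_equiv_S_pi[OF assms(6)] invariant_diag_Times[OF assms(6)] equiv_Times
    unfolding K_def factors_def by auto
  have "K \<noteq> {}" unfolding K_def by simp
  then have "closedin (top_of_set (X0 \<times> X0)) R" "invariant_set (diag_act act) R" "equiv X0 R"
    unfolding R_def by (simp_all add: members closedin_Inter invariant_set_Inter equiv_Inter)
  with Q have "S_star act X X0 \<subseteq> R"
    unfolding S_star_def by (intro Inter_lower CollectI conjI)
  then show ?thesis
    using Q R_S_eq by blast
qed

end
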